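(* Let $p\ge 1$ and $c>0$ be constants. For every $\beta\ge 0$ the boundary value problem $$x'''+c\,x^p\, x''=0\ \text{ on } [0,\infty),\qquad x(0)=0=x'(0),\qquad \lim_{t\to\infty}x'(t)=\beta$$ has a solution. *)

theory Defs
  imports Complex_Main
begin

end

theory Submission
  imports Defs "HOL-Analysis.Analysis"
begin

(*
  If g is an antiderivative of x^p, the equation says that x'' exp(c g) is constant; normalising
  this constant to 1 gives the first-order system x' = x1, x1' = exp(-c g), g' = x^p.  This system
  has a global solution on [0, oo) by Banach's fixed point theorem: dividing the unknown exp(-c g)
  by a rapidly growing weight turns the corresponding Picard-type map into a contraction with
  constant 1/2 for the sup norm.  Along the solution x1 increases, so x and then g grow at least
  linearly, x1' decays exponentially and x1 tends to a limit L > 0.  Finally t \<mapsto> a x(a^p t)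
  solves the equation again and multiplies the limit of x' by a^(p+1); choosing a^(p+1) = beta / L
  gives the claim, and x = 0 handles beta = 0.
*)

lemma integrable_on_atLeastAtMost_if_continuous_on_atLeast:
  fixes f :: "real \<Rightarrow> real"
  assumes "continuous_on {a..} f"
  shows "f integrable_on {a..b}"
  by (rule integrable_continuous_real) (auto intro: continuous_on_subset[OF assms])

lemma has_real_derivative_integral_atLeast:
  fixes f :: "real \<Rightarrow> real"
  assumes "continuous_on {a..} f" and "a \<le> t"
  shows "((\<lambda>u. integral {a..u} f) has_real_derivative f t) (at t within {a..})"
proof -
  have "continuous_on {a..t+1} f"
    by (auto intro: continuous_on_subset[OF assms(1)])
  then have "((\<lambda>u. integral {a..u} f) has_real_derivative f t) (at t within {a..t+1})"
    using integral_has_real_derivative assms(2) by auto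
  moreover have "at t within {a..t+1} = at t within {a..}"
    by (rule at_within_nhd[where S="{..<t+1}"]) auto
  ultimately show ?thesis by simp
qed

lemma has_real_derivative_at_if_within_atLeast:
  fixes f :: "real \<Rightarrow> real"
  assumes "(f has_real_derivative d) (at t within {a..})" and "a < t"
  shows "(f has_real_derivative d) (at t)"
  using assms(1) at_within_interior[of t "{a..}"] assms(2) by simp

lemma continuous_on_atLeast_if_has_real_derivative:
  fixes f :: "real \<Rightarrow> real"
  assumes "\<And>t. a \<le> t \<Longrightarrow> (f has_real_derivative f' t) (at t within {a..})"
  shows "continuous_on {a..} f"
  using assms by (meson DERIV_continuous atLeast_iff continuous_on_eq_continuous_within)

lemma continuous_on_integral_atLeast:
  fixes f :: "real \<Rightarrow> real"
  assumes "continuous_on {a..} f"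
  shows "continuous_on {a..} (\<lambda>u. integral {a..u} f)"
  using has_real_derivative_integral_atLeast[OF assms]
  by (rule continuous_on_atLeast_if_has_real_derivative)

lemma abs_integral_diff_le_integral:
  fixes f g B :: "'a::euclidean_space \<Rightarrow> real"
  assumes "f integrable_on S" "g integrable_on S" "B integrable_on S"
    and "\<And>s. s \<in> S \<Longrightarrow> \<bar>f s - g s\<bar> \<le> B s"
  shows "\<bar>integral S f - integral S g\<bar> \<le> integral S B"
  using integral_norm_bound_integral[of "\<lambda>s. f s - g s" S B] assms
  by (simp add: integral_diff integrable_diff)

lemma abs_exp_diff_le_nonpos:
  fixes a b :: real
  assumes "a \<le> 0" and "b \<le> 0"
  shows "\<bar>exp a - exp b\<bar> \<le> \<bar>a - b\<bar>"
  using field_differentiable_bound[of "{..0}" exp exp 1 a b] assms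
  by (auto intro: DERIV_exp[THEN has_field_derivative_at_within])

lemma abs_powr_diff_le:
  fixes a b M p :: real
  assumes "0 \<le> a" "0 \<le> b" "a \<le> M" "b \<le> M" and p: "1 \<le> p"
  shows "\<bar>a powr p - b powr p\<bar> \<le> p * M powr (p - 1) * \<bar>a - b\<bar>"
proof -
  have *: "b powr p - a powr p \<le> p * M powr (p - 1) * (b - a)"
    if ab: "0 \<le> a" "a < b" "b \<le> M" for a b
  proof -
    have deriv: "DERIV (\<lambda>u. u powr p) z :> p * z powr (p - 1)" if "0 < z" for z
      using that by (intro has_real_derivative_powr) auto
    have "continuous_on {a..b} (\<lambda>u. u powr p)"
      using ab p by (intro continuous_on_powr') (auto intro: continuous_intros)
    moreover have "(\<lambda>u. u powr p) differentiable (at z)" if "a < z" "z < b" for z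
      using deriv[of z] that ab real_differentiable_def by auto
    ultimately obtain l z where z: "a < z" "z < b" "DERIV (\<lambda>u. u powr p) z :> l"
        and mvt: "b powr p - a powr p = (b - a) * l"
      using MVT[OF ab(2)] by blast
    have "l = p * z powr (p - 1)"
      using DERIV_unique[OF z(3) deriv] z ab by simp
    also have "\<dots> \<le> p * M powr (p - 1)"
      using z ab p by (intro mult_left_mono powr_mono2) auto
    finally show ?thesis
      using mvt ab by (simp add: mult_left_mono mult.commute)
  qed
  have "x powr p \<le> y powr p" if "0 \<le> x" "x \<le> y" for x y
    using that p by (intro powr_mono2) auto
  then show ?thesis
    using *[of a b] *[of b a] assms
    by (cases a b rule: linorder_cases) (auto simp: abs_minus_commute abs_le_iff)
qed

lemma DERIV_le_imp_diff_le:
  fixes f g :: "real \<Rightarrow> real"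
  assumes "a \<le> b"
    and "\<And>t. a \<le> t \<Longrightarrow> t \<le> b \<Longrightarrow> (f has_real_derivative f' t) (at t)"
    and "\<And>t. a \<le> t \<Longrightarrow> t \<le> b \<Longrightarrow> (g has_real_derivative g' t) (at t)"
    and "\<And>t. a \<le> t \<Longrightarrow> t \<le> b \<Longrightarrow> f' t \<le> g' t"
  shows "f b - f a \<le> g b - g a"
proof -
  have "g a - f a \<le> g b - f b"
  proof (rule DERIV_nonneg_imp_nondecreasing[OF assms(1)])
    fix t assume "a \<le> t" "t \<le> b"
    then show "\<exists>d. ((\<lambda>t. g t - f t) has_real_derivative d) (at t) \<and> 0 \<le> d"
      using assms(2-4) by (intro exI[of _ "g' t - f' t"] conjI DERIV_diff) auto
  qed
  then show ?thesis by simp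
qed

lemma tendsto_SUP_at_top_if_mono_on:
  fixes f :: "real \<Rightarrow> real"
  assumes mono: "mono_on {a..} f" and bdd: "bdd_above (f ` {a..})"
  shows "(f \<longlongrightarrow> (SUP t\<in>{a..}. f t)) at_top"
proof (rule increasing_tendsto)
  show "\<forall>\<^sub>F t in at_top. f t \<le> (SUP t\<in>{a..}. f t)"
    using eventually_ge_at_top[of a] by eventually_elim (auto intro: cSUP_upper bdd)
next
  fix l assume "l < (SUP t\<in>{a..}. f t)"
  then obtain s where s: "a \<le> s" "l < f s"
    using less_cSUP_iff[OF _ bdd] by auto
  have "l < f t" if "s \<le> t" for t
    using mono_onD[OF mono, of s t] s that by simp
  then show "\<forall>\<^sub>F t in at_top. l < f t"
    unfolding eventually_at_top_linorder by blast
qed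

lemma has_real_derivative_rescale_atLeast_0:
  fixes f :: "real \<Rightarrow> real"
  assumes "0 < \<mu>" "0 \<le> t" and "(f has_real_derivative d) (at (\<mu> * t) within {0..})"
  shows "((\<lambda>s. a * f (\<mu> * s)) has_real_derivative a * \<mu> * d) (at t within {0..})"
proof -
  have "(\<lambda>s. \<mu> * s) ` {0..} = {0..}"
    using \<open>0 < \<mu>\<close> by (auto simp: image_iff intro!: bexI[of _ "x / \<mu>" for x])
  then have "(f \<circ> (\<lambda>s. \<mu> * s) has_real_derivative d * \<mu>) (at t within {0..})"
    by (intro DERIV_image_chain) (auto intro!: derivative_eq_intros assms(3))
  from DERIV_cmult[OF this, of a] show ?thesis
    by (simp add: o_def algebra_simps)
qed

lemma exists_scale_factor:
  fixes \<beta> L p :: real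
  assumes "0 < \<beta>" "0 < L" "0 \<le> p"
  obtains \<alpha> where "0 < \<alpha>" and "\<alpha> * \<alpha> powr p * L = \<beta>"
proof
  define \<alpha> where "\<alpha> = (\<beta> / L) powr (1 / (p + 1))"
  show "0 < \<alpha>"
    using assms by (simp add: \<alpha>_def)
  have "\<alpha> * \<alpha> powr p = \<alpha> powr (p + 1)"
    using \<open>0 < \<alpha>\<close> by (simp add: powr_add)
  also have "\<dots> = (\<beta> / L) powr (1 / (p + 1) * (p + 1))"
    unfolding \<alpha>_def by (rule powr_powr)
  also have "\<dots> = \<beta> / L"
    using assms by simp
  finally show "\<alpha> * \<alpha> powr p * L = \<beta>"
    using assms by simp
qed
locale generalized_blasius =
  fixes c p :: real
  assumes c_pos: "0 < c" and p_ge_1: "1 \<le> p"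
begin

(* The derivative of the exponent dominates p (t^2 + 1)^(p - 1) t^2, the Lipschitz constant of
   x^p on [0, t^2 + 1] times the factor t^2 lost by integrating twice. *)
definition weight :: "real \<Rightarrow> real" where
  "weight t = exp (2 * c * (t * (t\<^sup>2 + 1) powr p))"

definition x2_of :: "(real \<Rightarrow> real) \<Rightarrow> real \<Rightarrow> real" where
  "x2_of u t = clamp 0 1 (weight t * u t)"

definition x1_of :: "(real \<Rightarrow> real) \<Rightarrow> real \<Rightarrow> real" where
  "x1_of u t = integral {0..t} (x2_of u)"

definition x_of :: "(real \<Rightarrow> real) \<Rightarrow> real \<Rightarrow> real" where
  "x_of u t = integral {0..t} (x1_of u)"

definition g_of :: "(real \<Rightarrow> real) \<Rightarrow> real \<Rightarrow> real" where
  "g_of u t = integral {0..t} (\<lambda>s. x_of u s powr p)"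

(* At a fixed point u we get weight * u = exp(-c g) in [0, 1], so the clamp in x2_of is inactive;
   it only makes the map globally Lipschitz. *)
definition picard :: "(real \<Rightarrow> real) \<Rightarrow> real \<Rightarrow> real" where
  "picard u t = exp (- c * g_of u t) / weight t"

lemma weight_pos: "0 < weight t"
  by (simp add: weight_def)

lemma weight_0 [simp]: "weight 0 = 1"
  by (simp add: weight_def)

lemma weight_ge_1: "0 \<le> t \<Longrightarrow> 1 \<le> weight t"
  using c_pos by (simp add: weight_def)

lemma weight_mono:
  assumes "0 \<le> s" "s \<le> t"
  shows "weight s \<le> weight t"
proof -
  have "(s\<^sup>2 + 1) powr p \<le> (t\<^sup>2 + 1) powr p"
    using assms p_ge_1 by (intro powr_mono2) (auto intro: power_mono)
  then have "s * (s\<^sup>2 + 1) powr p \<le> t * (t\<^sup>2 + 1) powr p"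
    using assms by (intro mult_mono) auto
  then show ?thesis
    using c_pos by (simp add: weight_def)
qed

lemma continuous_on_weight: "continuous_on S weight"
  unfolding weight_def by (intro continuous_intros) (smt (verit) zero_le_power2)

lemma weight_has_real_derivative:
  "(weight has_real_derivative
      2 * c * weight t * ((t\<^sup>2 + 1) powr p + 2 * p * t\<^sup>2 * (t\<^sup>2 + 1) powr (p - 1))) (at t)"
proof -
  have "0 < t\<^sup>2 + 1"
    by (smt (verit) zero_le_power2)
  then show ?thesis
    unfolding weight_def[abs_def]
    by (intro derivative_eq_intros refl) (auto simp: algebra_simps power2_eq_square)
qed

lemma integral_weighted_rate_le:
  assumes "0 \<le> t"
  shows "integral {0..t} (\<lambda>r. p * (r\<^sup>2 + 1) powr (p - 1) * r\<^sup>2 * weight r)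
    \<le> (weight t - 1) / (2 * c)"
proof -
  define rate where "rate r = (r\<^sup>2 + 1) powr p + 2 * p * r\<^sup>2 * (r\<^sup>2 + 1) powr (p - 1)" for r
  have "((\<lambda>r. weight r / (2 * c)) has_real_derivative weight r * rate r) (at r within {0..t})" for r
    using DERIV_cdivide[OF weight_has_real_derivative, of "2 * c" r] c_pos
    unfolding rate_def by (simp add: has_field_derivative_at_within)
  then have "((\<lambda>r. weight r * rate r) has_integral (weight t - 1) / (2 * c)) {0..t}"
    using fundamental_theorem_of_calculus[OF assms, of "\<lambda>r. weight r / (2 * c)"]
    by (simp add: has_real_derivative_iff_has_vector_derivative diff_divide_distrib)
  moreover have "p * (r\<^sup>2 + 1) powr (p - 1) * r\<^sup>2 * weight r \<le> weight r * rate r" for r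
  proof -
    have "0 \<le> p * r\<^sup>2 * (r\<^sup>2 + 1) powr (p - 1)"
      using p_ge_1 by simp
    then have "p * (r\<^sup>2 + 1) powr (p - 1) * r\<^sup>2 \<le> rate r"
      unfolding rate_def by (simp add: algebra_simps)
    then show ?thesis
      using weight_pos[of r] by (simp add: mult_left_mono mult.commute)
  qed
  moreover have "(\<lambda>r. p * (r\<^sup>2 + 1) powr (p - 1) * r\<^sup>2 * weight r) integrable_on {0..t}"
  proof (intro integrable_continuous_real continuous_intros continuous_on_weight)
  qed (smt (verit) zero_le_power2)
  ultimately show ?thesis
    using integral_le[of _ "{0..t}" "\<lambda>r. weight r * rate r"]
    by (simp add: integral_unique has_integral_integrable)
qed

context
  fixes u :: "real \<Rightarrow> real"
  assumes continuous_u: "continuous_on {0..} u"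
begin

lemma continuous_on_x2_of: "continuous_on {0..} (x2_of u)"
  unfolding x2_of_def[abs_def]
  by (intro continuous_on_compose2[OF clamp_continuous_on[OF continuous_on_id]]
      continuous_intros continuous_on_weight continuous_u) auto

lemma x2_of_bounds: "0 \<le> x2_of u t" "x2_of u t \<le> 1"
  using clamp_in_interval[of 0 1 "weight t * u t"] by (auto simp: x2_of_def)

lemma x1_of_has_real_derivative:
  "0 \<le> t \<Longrightarrow> (x1_of u has_real_derivative x2_of u t) (at t within {0..})"
  unfolding x1_of_def[abs_def] by (rule has_real_derivative_integral_atLeast[OF continuous_on_x2_of])

lemma continuous_on_x1_of: "continuous_on {0..} (x1_of u)"
  unfolding x1_of_def[abs_def] by (rule continuous_on_integral_atLeast[OF continuous_on_x2_of])

lemma x1_of_bounds: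
  assumes "0 \<le> t"
  shows "0 \<le> x1_of u t" "x1_of u t \<le> t"
proof -
  have int: "x2_of u integrable_on {0..t}"
    by (rule integrable_on_atLeastAtMost_if_continuous_on_atLeast[OF continuous_on_x2_of])
  show "0 \<le> x1_of u t"
    unfolding x1_of_def using x2_of_bounds
    by (intro Henstock_Kurzweil_Integration.integral_nonneg[OF int]) auto
  show "x1_of u t \<le> t"
    unfolding x1_of_def using integral_le[OF int, of "\<lambda>_. 1"] x2_of_bounds assms by force
qed

lemma x_of_has_real_derivative:
  "0 \<le> t \<Longrightarrow> (x_of u has_real_derivative x1_of u t) (at t within {0..})"
  unfolding x_of_def[abs_def] by (rule has_real_derivative_integral_atLeast[OF continuous_on_x1_of])

lemma continuous_on_x_of: "continuous_on {0..} (x_of u)"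
  unfolding x_of_def[abs_def] by (rule continuous_on_integral_atLeast[OF continuous_on_x1_of])

lemma x_of_bounds:
  assumes "0 \<le> t"
  shows "0 \<le> x_of u t" "x_of u t \<le> t\<^sup>2"
proof -
  have int: "x1_of u integrable_on {0..t}"
    by (rule integrable_on_atLeastAtMost_if_continuous_on_atLeast[OF continuous_on_x1_of])
  show "0 \<le> x_of u t"
    unfolding x_of_def using x1_of_bounds
    by (intro Henstock_Kurzweil_Integration.integral_nonneg[OF int]) auto
  have "x_of u t \<le> integral {0..t} (\<lambda>_. t)"
    unfolding x_of_def using x1_of_bounds by (intro integral_le[OF int]) (auto intro: order_trans)
  then show "x_of u t \<le> t\<^sup>2"
    using assms by (simp add: power2_eq_square)
qed

lemma continuous_on_x_of_powr: "continuous_on {0..} (\<lambda>t. x_of u t powr p)"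
  using x_of_bounds p_ge_1 by (intro continuous_on_powr' continuous_on_x_of continuous_intros) auto

lemma g_of_has_real_derivative:
  "0 \<le> t \<Longrightarrow> (g_of u has_real_derivative x_of u t powr p) (at t within {0..})"
  unfolding g_of_def[abs_def]
  by (rule has_real_derivative_integral_atLeast[OF continuous_on_x_of_powr])

lemma g_of_nonneg: "0 \<le> t \<Longrightarrow> 0 \<le> g_of u t"
  unfolding g_of_def
  by (intro Henstock_Kurzweil_Integration.integral_nonneg
      integrable_on_atLeastAtMost_if_continuous_on_atLeast[OF continuous_on_x_of_powr]) auto

lemma continuous_on_picard: "continuous_on {0..} (picard u)"
  unfolding picard_def[abs_def] g_of_def
  by (intro continuous_intros continuous_on_integral_atLeast continuous_on_x_of_powr
      continuous_on_weight) (simp add: weight_pos less_imp_neq[symmetric])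

lemma picard_bounds:
  assumes "0 \<le> t"
  shows "0 < picard u t" "picard u t \<le> 1"
proof -
  show "0 < picard u t"
    by (simp add: picard_def weight_pos)
  have "exp (- c * g_of u t) \<le> 1"
    using g_of_nonneg[OF assms] c_pos by simp
  then show "picard u t \<le> 1"
    using weight_ge_1[OF assms] by (simp add: picard_def divide_le_eq_1 del: exp_le_one_iff)
qed

end

context
  fixes u v :: "real \<Rightarrow> real" and D :: real
  assumes continuous_u: "continuous_on {0..} u" and continuous_v: "continuous_on {0..} v"
    and dist_le: "\<And>s. 0 \<le> s \<Longrightarrow> \<bar>u s - v s\<bar> \<le> D"
begin

lemma dist_bound_nonneg: "0 \<le> D"
  using dist_le[of 0] by simp

lemma x2_of_diff_le:
  assumes "0 \<le> s"
  shows "\<bar>x2_of u s - x2_of v s\<bar> \<le> weight s * D"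
proof -
  have "\<bar>x2_of u s - x2_of v s\<bar> \<le> \<bar>weight s * u s - weight s * v s\<bar>"
    using dist_clamps_le_dist_args[of 0 1 "weight s * u s" "weight s * v s"]
    by (simp add: x2_of_def dist_real_def)
  also have "\<dots> = weight s * \<bar>u s - v s\<bar>"
    using weight_pos[of s] by (simp add: abs_mult right_diff_distrib[symmetric])
  also have "\<dots> \<le> weight s * D"
    using dist_le[OF assms] weight_pos[of s] by (intro mult_left_mono) auto
  finally show ?thesis .
qed

lemma x1_of_diff_le:
  assumes "0 \<le> t"
  shows "\<bar>x1_of u t - x1_of v t\<bar> \<le> t * (weight t * D)"
proof -
  have "\<bar>x1_of u t - x1_of v t\<bar> \<le> integral {0..t} (\<lambda>_. weight t * D)"
    unfolding x1_of_def
  proof (intro abs_integral_diff_le_integral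
      integrable_on_atLeastAtMost_if_continuous_on_atLeast continuous_on_x2_of
      continuous_u continuous_v continuous_on_const)
    fix s assume "s \<in> {0..t}"
    then show "\<bar>x2_of u s - x2_of v s\<bar> \<le> weight t * D"
      using x2_of_diff_le[of s] mult_right_mono[OF weight_mono[of s t] dist_bound_nonneg]
      by auto
  qed
  then show ?thesis
    using assms by (simp add: ac_simps)
qed

lemma x_of_diff_le:
  assumes "0 \<le> t"
  shows "\<bar>x_of u t - x_of v t\<bar> \<le> t\<^sup>2 * (weight t * D)"
proof -
  have "\<bar>x_of u t - x_of v t\<bar> \<le> integral {0..t} (\<lambda>_. t * (weight t * D))"
    unfolding x_of_def
  proof (intro abs_integral_diff_le_integral
      integrable_on_atLeastAtMost_if_continuous_on_atLeast continuous_on_x1_of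
      continuous_u continuous_v continuous_on_const)
    fix s assume s: "s \<in> {0..t}"
    have "s * (weight s * D) \<le> t * (weight t * D)"
      using s mult_right_mono[OF weight_mono[of s t] dist_bound_nonneg] weight_pos[of s]
        dist_bound_nonneg
      by (auto intro: mult_mono)
    then show "\<bar>x1_of u s - x1_of v s\<bar> \<le> t * (weight t * D)"
      using x1_of_diff_le[of s] s by simp
  qed
  then show ?thesis
    using assms by (simp add: power2_eq_square ac_simps)
qed

lemma g_of_diff_le:
  assumes "0 \<le> t"
  shows "\<bar>g_of u t - g_of v t\<bar> \<le> D * (weight t - 1) / (2 * c)"
proof -
  define rate where "rate r = p * (r\<^sup>2 + 1) powr (p - 1) * r\<^sup>2 * weight r" for r
  have "\<bar>g_of u t - g_of v t\<bar> \<le> integral {0..t} (\<lambda>r. D * rate r)"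
    unfolding g_of_def
  proof (intro abs_integral_diff_le_integral
      integrable_on_atLeastAtMost_if_continuous_on_atLeast continuous_on_x_of_powr
      continuous_u continuous_v)
    show "continuous_on {0..} (\<lambda>r. D * rate r)"
      unfolding rate_def
    proof (intro continuous_intros continuous_on_weight)
    qed (smt (verit) zero_le_power2)
    fix r assume r: "r \<in> {0..t}"
    have "\<bar>x_of u r powr p - x_of v r powr p\<bar> \<le> p * (r\<^sup>2 + 1) powr (p - 1) * \<bar>x_of u r - x_of v r\<bar>"
      using r x_of_bounds[OF continuous_u, of r] x_of_bounds[OF continuous_v, of r] p_ge_1
      by (intro abs_powr_diff_le) auto
    also have "\<dots> \<le> p * (r\<^sup>2 + 1) powr (p - 1) * (r\<^sup>2 * (weight r * D))"
      using r x_of_diff_le[of r] p_ge_1 by (intro mult_left_mono) auto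
    finally show "\<bar>x_of u r powr p - x_of v r powr p\<bar> \<le> D * rate r"
      by (simp add: rate_def algebra_simps)
  qed
  also have "\<dots> = D * integral {0..t} rate"
    by simp
  also have "\<dots> \<le> D * ((weight t - 1) / (2 * c))"
    using integral_weighted_rate_le[OF assms] dist_bound_nonneg
    unfolding rate_def by (intro mult_left_mono) auto
  finally show ?thesis
    by simp
qed

lemma picard_diff_le:
  assumes "0 \<le> t"
  shows "\<bar>picard u t - picard v t\<bar> \<le> D / 2"
proof -
  have "\<bar>picard u t - picard v t\<bar> = \<bar>exp (- c * g_of u t) - exp (- c * g_of v t)\<bar> / weight t"
    using weight_pos[of t] by (simp add: picard_def diff_divide_distrib[symmetric])
  also have "\<dots> \<le> \<bar>- c * g_of u t - - c * g_of v t\<bar> / weight t"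
    using g_of_nonneg[OF continuous_u assms] g_of_nonneg[OF continuous_v assms] c_pos weight_pos[of t]
    by (intro divide_right_mono abs_exp_diff_le_nonpos) auto
  also have "\<dots> = c * \<bar>g_of u t - g_of v t\<bar> / weight t"
  proof -
    have "- c * g_of u t - - c * g_of v t = c * (g_of v t - g_of u t)"
      by (simp add: algebra_simps)
    then show ?thesis
      using c_pos by (simp add: abs_mult abs_minus_commute)
  qed
  also have "\<dots> \<le> c * (D * (weight t - 1) / (2 * c)) / weight t"
    using g_of_diff_le[OF assms] c_pos weight_pos[of t]
    by (intro divide_right_mono mult_left_mono) auto
  also have "\<dots> = D / 2 * (1 - 1 / weight t)"
    using c_pos weight_pos[of t] by (simp add: field_simps)
  also have "\<dots> \<le> D / 2"
    using dist_bound_nonneg weight_pos[of t] by (simp add: mult_left_le)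
  finally show ?thesis .
qed

end

lemma picard_has_fixed_point:
  obtains u where "continuous_on {0..} u" and "\<And>t. 0 \<le> t \<Longrightarrow> picard u t = u t"
proof -
  \<comment> \<open>extending constantly to the left lets us work in the complete space of bounded
      continuous functions on the whole real line\<close>
  define T where "T f = Bcontfun (\<lambda>t. picard (apply_bcontfun f) (max 0 t))"
    for f :: "real \<Rightarrow>\<^sub>C real"
  have "(\<lambda>t. picard (apply_bcontfun f) (max 0 t)) \<in> bcontfun" for f :: "real \<Rightarrow>\<^sub>C real"
  proof (rule bcontfun_normI)
    show "continuous_on UNIV (\<lambda>t. picard (apply_bcontfun f) (max 0 t))"
      by (rule continuous_on_compose2[OF continuous_on_picard[OF continuous_on_apply_bcontfun]])
        (auto intro!: continuous_intros)
    show "norm (picard (apply_bcontfun f) (max 0 t)) \<le> 1" for t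
      using picard_bounds[OF continuous_on_apply_bcontfun, of "max 0 t" f] by simp
  qed
  then have T_apply: "apply_bcontfun (T f) t = picard (apply_bcontfun f) (max 0 t)" for f t
    unfolding T_def by (simp add: Bcontfun_inverse)
  have "dist (T f) (T f') \<le> 1/2 * dist f f'" for f f'
  proof (rule dist_bound)
    fix t
    have "\<bar>picard (apply_bcontfun f) (max 0 t) - picard (apply_bcontfun f') (max 0 t)\<bar>
      \<le> dist f f' / 2"
      using dist_bounded[of f _ f']
      by (intro picard_diff_le continuous_on_apply_bcontfun) (auto simp: dist_real_def)
    then show "dist (T f t) (T f' t) \<le> 1/2 * dist f f'"
      by (simp add: T_apply dist_real_def)
  qed
  then obtain f where "T f = f"
    using banach_fix_type[of "1/2" T] by auto
  then have "picard (apply_bcontfun f) t = apply_bcontfun f t" if "0 \<le> t" for t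
    using T_apply[of f t] that by simp
  then show ?thesis
    using that continuous_on_apply_bcontfun by blast
qed

end

locale blasius_system_solution = generalized_blasius +
  fixes x x1 g :: "real \<Rightarrow> real"
  assumes x_deriv: "\<And>t. 0 \<le> t \<Longrightarrow> (x has_real_derivative x1 t) (at t within {0..})"
    and x1_deriv: "\<And>t. 0 \<le> t \<Longrightarrow> (x1 has_real_derivative exp (- c * g t)) (at t within {0..})"
    and g_deriv: "\<And>t. 0 \<le> t \<Longrightarrow> (g has_real_derivative x t powr p) (at t within {0..})"
    and x_nonneg: "\<And>t. 0 \<le> t \<Longrightarrow> 0 \<le> x t"
    and g_nonneg: "\<And>t. 0 \<le> t \<Longrightarrow> 0 \<le> g t"
    and x_0: "x 0 = 0" and x1_0: "x1 0 = 0"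

context generalized_blasius
begin

lemma system_solution_exists: "\<exists>x x1 g. blasius_system_solution c p x x1 g"
proof -
  obtain u where u: "continuous_on {0..} u" and fixed: "\<And>t. 0 \<le> t \<Longrightarrow> picard u t = u t"
    using picard_has_fixed_point by blast
  have "x2_of u t = exp (- c * g_of u t)" if "0 \<le> t" for t
  proof -
    have "weight t * u t = exp (- c * g_of u t)"
      using fixed[OF that] weight_pos[of t] by (simp add: picard_def field_simps)
    moreover have "exp (- c * g_of u t) \<le> 1"
      using g_of_nonneg[OF u that] c_pos by simp
    ultimately show ?thesis
      by (simp add: x2_of_def)
  qed
  then have "blasius_system_solution c p (x_of u) (x1_of u) (g_of u)"
    using x_of_has_real_derivative[OF u] x1_of_has_real_derivative[OF u]
      g_of_has_real_derivative[OF u] x_of_bounds(1)[OF u] g_of_nonneg[OF u]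
    by unfold_locales (auto simp: x_of_def x1_of_def)
  then show ?thesis
    by blast
qed

end

context blasius_system_solution
begin

lemma continuous_on_x1: "continuous_on {0..} x1"
  by (rule continuous_on_atLeast_if_has_real_derivative) (rule x1_deriv)

lemma x1_strict_mono:
  assumes "0 \<le> a" and "a < b"
  shows "x1 a < x1 b"
proof (rule DERIV_pos_imp_increasing_open[OF \<open>a < b\<close>])
  show "continuous_on {a..b} x1"
    using continuous_on_x1 by (rule continuous_on_subset) (use assms(1) in auto)
  fix t assume "a < t" "t < b"
  then show "\<exists>d. (x1 has_real_derivative d) (at t) \<and> 0 < d"
    using has_real_derivative_at_if_within_atLeast[OF x1_deriv, of t] assms(1)
    by (intro exI[of _ "exp (- c * g t)"]) auto
qed

lemma x1_1_pos: "0 < x1 1"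
  using x1_strict_mono[of 0 1] x1_0 by simp

lemma x_ge_linear:
  assumes "1 \<le> t"
  shows "x1 1 * (t - 1) \<le> x t"
proof -
  have "x1 1 * t - x1 1 * 1 \<le> x t - x 1"
  proof (rule DERIV_le_imp_diff_le[OF assms])
    fix s assume s: "1 \<le> s" "s \<le> t"
    show "((\<lambda>s. x1 1 * s) has_real_derivative x1 1) (at s)"
      by (auto intro!: derivative_eq_intros)
    show "(x has_real_derivative x1 s) (at s)"
      using has_real_derivative_at_if_within_atLeast[OF x_deriv] s by simp
    show "x1 1 \<le> x1 s"
      using x1_strict_mono[of 1 s] s by (cases "s = 1") auto
  qed
  then show ?thesis
    using x_nonneg[of 1] by (simp add: algebra_simps)
qed

lemma g_ge_linear:
  obtains t\<^sub>0 where "0 < t\<^sub>0" and "\<And>t. t\<^sub>0 \<le> t \<Longrightarrow> t - t\<^sub>0 \<le> g t"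
proof
  define t\<^sub>0 where "t\<^sub>0 = 1 + 1 / x1 1"
  have "1 < t\<^sub>0"
    using x1_1_pos by (simp add: t\<^sub>0_def)
  have x_ge_1: "1 \<le> x t" if "t\<^sub>0 \<le> t" for t
  proof -
    have "1 \<le> x1 1 * (t - 1)"
      using that x1_1_pos by (simp add: t\<^sub>0_def field_simps)
    also have "\<dots> \<le> x t"
      using \<open>1 < t\<^sub>0\<close> that by (intro x_ge_linear) simp
    finally show ?thesis .
  qed
  show "0 < t\<^sub>0"
    using \<open>1 < t\<^sub>0\<close> by simp
  fix t assume t: "t\<^sub>0 \<le> t"
  have "t - t\<^sub>0 \<le> g t - g t\<^sub>0"
  proof (rule DERIV_le_imp_diff_le[OF t])
    fix s assume s: "t\<^sub>0 \<le> s" "s \<le> t"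
    then have "0 < s"
      using \<open>1 < t\<^sub>0\<close> by simp
    then show "(g has_real_derivative x s powr p) (at s)"
      using has_real_derivative_at_if_within_atLeast[OF g_deriv] by simp
    show "1 \<le> x s powr p"
      using x_ge_1[OF s(1)] p_ge_1 by (intro ge_one_powr_ge_zero) auto
  qed (auto intro!: derivative_eq_intros)
  then show "t - t\<^sub>0 \<le> g t"
    using g_nonneg[of t\<^sub>0] \<open>1 < t\<^sub>0\<close> by simp
qed

lemma x1_bdd_above: "bdd_above (x1 ` {0..})"
proof -
  obtain t\<^sub>0 where "0 < t\<^sub>0" and g_ge: "\<And>t. t\<^sub>0 \<le> t \<Longrightarrow> t - t\<^sub>0 \<le> g t"
    using g_ge_linear by blast
  have "x1 t \<le> x1 t\<^sub>0 + 1 / c" if "0 \<le> t" for t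
  proof (cases "t\<^sub>0 \<le> t")
    case True
    have "x1 t - x1 t\<^sub>0 \<le> - exp (- c * (t - t\<^sub>0)) / c - - exp (- c * (t\<^sub>0 - t\<^sub>0)) / c"
    proof (rule DERIV_le_imp_diff_le[OF True])
      fix s assume s: "t\<^sub>0 \<le> s" "s \<le> t"
      show "(x1 has_real_derivative exp (- c * g s)) (at s)"
        using has_real_derivative_at_if_within_atLeast[OF x1_deriv] s \<open>0 < t\<^sub>0\<close> by simp
      show "((\<lambda>s. - exp (- c * (s - t\<^sub>0)) / c) has_real_derivative exp (- c * (s - t\<^sub>0))) (at s)"
        using c_pos by (auto intro!: derivative_eq_intros)
      show "exp (- c * g s) \<le> exp (- c * (s - t\<^sub>0))"
        using g_ge[OF s(1)] c_pos by simp
    qed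
    moreover have "0 \<le> exp (- c * (t - t\<^sub>0)) / c"
      using c_pos by simp
    ultimately show ?thesis
      by simp
  next
    case False
    then show ?thesis
      using x1_strict_mono[OF that, of t\<^sub>0] c_pos by (simp add: add_increasing2)
  qed
  then show ?thesis
    by (intro bdd_aboveI[where M = "x1 t\<^sub>0 + 1 / c"]) auto
qed

lemma x1_tendsto_pos_limit:
  obtains L where "0 < L" and "(x1 \<longlongrightarrow> L) at_top"
proof
  show "(x1 \<longlongrightarrow> (SUP t\<in>{0..}. x1 t)) at_top"
    using x1_strict_mono x1_bdd_above
    by (intro tendsto_SUP_at_top_if_mono_on) (auto intro!: mono_onI simp: order_le_less)
  show "0 < (SUP t\<in>{0..}. x1 t)"
    using x1_1_pos cSUP_upper[OF _ x1_bdd_above, of 1] by simp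
qed

lemma rescaled_bvp_solution:
  fixes \<beta> :: real
  assumes "0 < \<beta>"
  shows "\<exists>X X1 X2 X3 :: real \<Rightarrow> real.
           (\<forall>t\<ge>0. (X has_real_derivative X1 t) (at t within {0..}) \<and>
                  (X1 has_real_derivative X2 t) (at t within {0..}) \<and>
                  (X2 has_real_derivative X3 t) (at t within {0..}) \<and>
                  X t \<ge> 0 \<and> X3 t + c * (X t powr p) * X2 t = 0) \<and>
           X 0 = 0 \<and> X1 0 = 0 \<and> (X1 \<longlongrightarrow> \<beta>) at_top"
proof -
  obtain L where "0 < L" and x1_lim: "(x1 \<longlongrightarrow> L) at_top"
    using x1_tendsto_pos_limit by blast
  obtain \<alpha> where "0 < \<alpha>" and scale: "\<alpha> * \<alpha> powr p * L = \<beta>"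
    using exists_scale_factor[OF assms \<open>0 < L\<close>, of p] p_ge_1 by auto
  define \<mu> where "\<mu> = \<alpha> powr p"
  have "0 < \<mu>"
    using \<open>0 < \<alpha>\<close> by (simp add: \<mu>_def)
  define e where "e t = exp (- c * g t)" for t
  have e_deriv: "(e has_real_derivative - c * x t powr p * e t) (at t within {0..})" if "0 \<le> t" for t
    unfolding e_def[abs_def] using g_deriv[OF that] by (auto intro!: derivative_eq_intros)
  have X_powr: "(\<alpha> * x (\<mu> * t)) powr p = \<mu> * x (\<mu> * t) powr p" if "0 \<le> t" for t
    using \<open>0 < \<alpha>\<close> \<open>0 < \<mu>\<close> x_nonneg[of "\<mu> * t"] that by (simp add: \<mu>_def powr_mult)
  have "filterlim (\<lambda>t. \<mu> * t) at_top at_top"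
    using \<open>0 < \<mu>\<close> by (intro filterlim_tendsto_pos_mult_at_top[OF tendsto_const] filterlim_ident)
  then have X1_lim: "((\<lambda>t. \<alpha> * \<mu> * x1 (\<mu> * t)) \<longlongrightarrow> \<alpha> * \<mu> * L) at_top"
    by (intro tendsto_mult_left filterlim_compose[OF x1_lim])
  show ?thesis
  proof (rule exI[of _ "\<lambda>t. \<alpha> * x (\<mu> * t)"], rule exI[of _ "\<lambda>t. \<alpha> * \<mu> * x1 (\<mu> * t)"],
      rule exI[of _ "\<lambda>t. \<alpha> * \<mu> * \<mu> * e (\<mu> * t)"],
      rule exI[of _ "\<lambda>t. \<alpha> * \<mu> * \<mu> * \<mu> * (- c * x (\<mu> * t) powr p * e (\<mu> * t))"],
      intro conjI allI impI)
    fix t :: real assume "0 \<le> t"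
    then have "0 \<le> \<mu> * t"
      using \<open>0 < \<mu>\<close> by simp
    show "((\<lambda>t. \<alpha> * x (\<mu> * t)) has_real_derivative \<alpha> * \<mu> * x1 (\<mu> * t)) (at t within {0..})"
      by (rule has_real_derivative_rescale_atLeast_0[OF \<open>0 < \<mu>\<close> \<open>0 \<le> t\<close> x_deriv[OF \<open>0 \<le> \<mu> * t\<close>]])
    show "((\<lambda>t. \<alpha> * \<mu> * x1 (\<mu> * t)) has_real_derivative \<alpha> * \<mu> * \<mu> * e (\<mu> * t)) (at t within {0..})"
      using has_real_derivative_rescale_atLeast_0[OF \<open>0 < \<mu>\<close> \<open>0 \<le> t\<close> x1_deriv[OF \<open>0 \<le> \<mu> * t\<close>]]
      by (simp add: e_def)
    show "((\<lambda>t. \<alpha> * \<mu> * \<mu> * e (\<mu> * t)) has_real_derivative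
        \<alpha> * \<mu> * \<mu> * \<mu> * (- c * x (\<mu> * t) powr p * e (\<mu> * t))) (at t within {0..})"
      by (rule has_real_derivative_rescale_atLeast_0[OF \<open>0 < \<mu>\<close> \<open>0 \<le> t\<close> e_deriv[OF \<open>0 \<le> \<mu> * t\<close>]])
    show "0 \<le> \<alpha> * x (\<mu> * t)"
      using \<open>0 < \<alpha>\<close> x_nonneg[OF \<open>0 \<le> \<mu> * t\<close>] by simp
    show "\<alpha> * \<mu> * \<mu> * \<mu> * (- c * x (\<mu> * t) powr p * e (\<mu> * t)) +
        c * (\<alpha> * x (\<mu> * t)) powr p * (\<alpha> * \<mu> * \<mu> * e (\<mu> * t)) = 0"
      using X_powr[OF \<open>0 \<le> t\<close>] by (simp add: algebra_simps)
  qed (use x_0 x1_0 scale[folded \<mu>_def] X1_lim in auto)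
qed

end

theorem theorem1:
  fixes p c \<beta> :: real
  assumes "p \<ge> 1" and "c > 0" and "\<beta> \<ge> 0"
  shows "\<exists>(x::real \<Rightarrow> real) x1 x2 x3.
           (\<forall>t\<ge>0. (x has_real_derivative x1 t) (at t within {0..}) \<and>
                    (x1 has_real_derivative x2 t) (at t within {0..}) \<and>
                    (x2 has_real_derivative x3 t) (at t within {0..}) \<and>
                    x t \<ge> 0 \<and>
                    x3 t + c * (x t powr p) * x2 t = 0) \<and>
           x 0 = 0 \<and> x1 0 = 0 \<and> (x1 \<longlongrightarrow> \<beta>) at_top"
proof (cases "\<beta> = 0")
  case True
  then show ?thesis
    by (intro exI[of _ "\<lambda>_. 0"]) simp
next
  case False
  interpret generalized_blasius c p
    using assms by unfold_locales auto
  obtain x x1 g where "blasius_system_solution c p x x1 g"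
    using system_solution_exists by blast
  then interpret blasius_system_solution c p x x1 g .
  show ?thesis
    using rescaled_bvp_solution False assms(3) by simp
qed

end
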